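(* There exists an instance of $P_n\,|\,\mathrm{conc}, p_j=1\,|\,L_{\max}$ whose conflict graph $G$ has treewidth $1$ and in which every optimal schedule has makespan $C_{\max}=\log n+1$, where $n$ is the number of jobs.
   Context: In $P_n\,|\,\mathrm{conc}, p_j=1\,|\,L_{\max}$, jobs $\{1,\dots,n\}$ have processing time $1$, release time $0$ and integer due dates $d_j$; there is a conflict graph $G$ on the jobs, and a schedule $C:\{1,\dots,n\}\to\mathbb{N}_{\ge1}$ is feasible iff $C(i)\ne C(j)$ for every edge $\{i,j\}$ of $G$. The objective $L_{\max}=\max_j (C_j-d_j)$ is minimized; $C_{\max}=\max_j C_j$. $\log$ is base $2$. *)

theory Defs
  imports Complex_Main
begin

definition simple_graph :: "'a set \<Rightarrow> 'a set set \<Rightarrow> bool" where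
  "simple_graph V E \<longleftrightarrow> finite V \<and> (\<forall>e\<in>E. e \<subseteq> V \<and> card e = 2)"

definition connected_in :: "'a set set \<Rightarrow> 'a set \<Rightarrow> bool" where
  "connected_in F S \<longleftrightarrow>
     (\<forall>u\<in>S. \<forall>v\<in>S. (u, v) \<in> {(a, b). a \<in> S \<and> b \<in> S \<and> {a, b} \<in> F}\<^sup>*)"

definition is_tree :: "'a set \<Rightarrow> 'a set set \<Rightarrow> bool" where
  "is_tree I F \<longleftrightarrow> simple_graph I F \<and> I \<noteq> {} \<and> connected_in F I \<and>
     (\<forall>e\<in>F. \<not> connected_in (F - {e}) I)"

definition tree_decomposition :: "'a set \<Rightarrow> 'a set set \<Rightarrow> nat set \<Rightarrow> nat set set \<Rightarrow> (nat \<Rightarrow> 'a set) \<Rightarrow> bool" where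
  "tree_decomposition V E I F B \<longleftrightarrow>
     is_tree I F \<and> (\<forall>t\<in>I. finite (B t) \<and> B t \<subseteq> V) \<and>
     (\<forall>v\<in>V. \<exists>t\<in>I. v \<in> B t) \<and>
     (\<forall>e\<in>E. \<exists>t\<in>I. e \<subseteq> B t) \<and>
     (\<forall>v\<in>V. connected_in F {t\<in>I. v \<in> B t})"

definition treewidth :: "'a set \<Rightarrow> 'a set set \<Rightarrow> nat" where
  "treewidth V E = (LEAST w. \<exists>I F B. tree_decomposition V E I F B \<and> (\<forall>t\<in>I. card (B t) \<le> w + 1))"

text \<open>Scheduling: jobs are 1..n, C j is the completion time of job j.\<close>
definition feasible_schedule :: "nat \<Rightarrow> nat set set \<Rightarrow> (nat \<Rightarrow> nat) \<Rightarrow> bool" where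
  "feasible_schedule n E C \<longleftrightarrow>
     (\<forall>j\<in>{1..n}. C j \<ge> 1) \<and> (\<forall>i j. {i, j} \<in> E \<longrightarrow> C i \<noteq> C j)"

definition Lmax :: "nat \<Rightarrow> (nat \<Rightarrow> int) \<Rightarrow> (nat \<Rightarrow> nat) \<Rightarrow> int" where
  "Lmax n d C = Max ((\<lambda>j. int (C j) - d j) ` {1..n})"

definition Cmax :: "nat \<Rightarrow> (nat \<Rightarrow> nat) \<Rightarrow> nat" where
  "Cmax n C = Max (C ` {1..n})"

definition optimal_schedule :: "nat \<Rightarrow> nat set set \<Rightarrow> (nat \<Rightarrow> int) \<Rightarrow> (nat \<Rightarrow> nat) \<Rightarrow> bool" where
  "optimal_schedule n E d C \<longleftrightarrow> feasible_schedule n E C \<and>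
     (\<forall>C'. feasible_schedule n E C' \<longrightarrow> Lmax n d C \<le> Lmax n d C')"

end

theory Submission
  imports Defs "HOL-Computational_Algebra.Primes"
begin

text \<open>Take the Fenwick tree on 1..2^k, in which v + 2^j is the parent of v = 2^j * odd, and
  give v the due date j + 1. Scheduling every v at j + 1 is feasible with Lmax = 0, so an optimal
  schedule meets all due dates. A vertex with valuation j has, for each i < j, a child with
  valuation i; by induction these children occupy the slots 1..j, leaving only j + 1 for v. Hence
  every optimal schedule finishes the root 2^k last, at time k + 1 = log n + 1.\<close>

definition induced_edge_rel :: "'a set set \<Rightarrow> 'a set \<Rightarrow> ('a \<times> 'a) set" where
  "induced_edge_rel F S = {(a, b). a \<in> S \<and> b \<in> S \<and> {a, b} \<in> F}"

lemma connected_in_iff_induced_edge_rel: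
  "connected_in F S \<longleftrightarrow> (\<forall>u\<in>S. \<forall>v\<in>S. (u, v) \<in> (induced_edge_rel F S)\<^sup>*)"
  by (simp add: connected_in_def induced_edge_rel_def)

lemma connected_in_if_all_reach:
  assumes "r \<in> S" and reach: "\<And>t. t \<in> S \<Longrightarrow> (t, r) \<in> (induced_edge_rel F S)\<^sup>*"
  shows "connected_in F S"
proof -
  have "sym ((induced_edge_rel F S)\<^sup>*)"
    by (intro sym_rtrancl) (auto simp: sym_def induced_edge_rel_def insert_commute)
  then show ?thesis
    unfolding connected_in_iff_induced_edge_rel using reach by (meson rtrancl_trans symD)
qed

lemma treewidth_eq_1I:
  assumes "tree_decomposition V E I F B" "\<forall>t\<in>I. card (B t) \<le> 2"
    and "e \<in> E" "card e = 2"
  shows "treewidth V E = 1"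
  unfolding treewidth_def
proof (rule Least_equality)
  show "\<exists>I F B. tree_decomposition V E I F B \<and> (\<forall>t\<in>I. card (B t) \<le> 1 + 1)"
    using assms(1,2) by (metis one_add_one)
next
  fix w assume "\<exists>I F B. tree_decomposition V E I F B \<and> (\<forall>t\<in>I. card (B t) \<le> w + 1)"
  then obtain I F B where dec: "tree_decomposition V E I F B" and width: "\<forall>t\<in>I. card (B t) \<le> w + 1"
    by blast
  then obtain t where "t \<in> I" "e \<subseteq> B t" "finite (B t)"
    using \<open>e \<in> E\<close> unfolding tree_decomposition_def by blast
  then have "card e \<le> w + 1" using width card_mono order_trans by blast
  then show "1 \<le> w" using \<open>card e = 2\<close> by simp
qed

definition parent_edges :: "nat set \<Rightarrow> nat \<Rightarrow> (nat \<Rightarrow> nat) \<Rightarrow> nat set set" where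
  "parent_edges I r q = (\<lambda>t. {t, q t}) ` (I - {r})"

locale rooted_by_parent =
  fixes I :: "nat set" and r :: nat and q :: "nat \<Rightarrow> nat"
  assumes finite_vertices: "finite I" and root_in: "r \<in> I"
    and parent_in: "t \<in> I - {r} \<Longrightarrow> q t \<in> I"
    and less_parent: "t \<in> I - {r} \<Longrightarrow> t < q t"
begin

abbreviation parent_rel :: "(nat \<times> nat) set" where
  "parent_rel \<equiv> {(t, q t) | t. t \<in> I - {r}}"

lemma parent_rel_rtrancl_le: "(a, b) \<in> parent_rel\<^sup>* \<Longrightarrow> a \<le> b"
proof (induction rule: rtrancl_induct)
  case (step b c)
  then show ?case using less_parent[of b] by auto
qed simp

lemma parent_rel_rtrancl_root: "t \<in> I \<Longrightarrow> (t, r) \<in> parent_rel\<^sup>*"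
proof (induction "Max I - t" arbitrary: t rule: less_induct)
  case less
  show ?case
  proof (cases "t = r")
    case False
    then have "q t \<in> I" "t < q t" using less.prems parent_in less_parent by auto
    moreover from this have "Max I - q t < Max I - t"
      using Max_ge[OF finite_vertices, of "q t"] by linarith
    ultimately have "(q t, r) \<in> parent_rel\<^sup>*" using less.hyps by blast
    moreover have "(t, q t) \<in> parent_rel" using False less.prems by blast
    ultimately show ?thesis by (meson converse_rtrancl_into_rtrancl)
  qed simp
qed

lemma is_tree_parent_edges: "is_tree I (parent_edges I r q)"
proof -
  let ?F = "parent_edges I r q"
  have simple: "simple_graph I ?F"
    unfolding simple_graph_def parent_edges_def
    using finite_vertices parent_in less_parent by (force simp: card_insert_if)
  have "parent_rel \<subseteq> induced_edge_rel ?F I"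
    using parent_in unfolding parent_edges_def induced_edge_rel_def by blast
  then have connected: "connected_in ?F I"
    using root_in parent_rel_rtrancl_root by (blast intro: connected_in_if_all_reach rtrancl_mono[THEN subsetD])
  have bridge: "\<not> connected_in (?F - {e}) I" if "e \<in> ?F" for e
  proof
    assume connected': "connected_in (?F - {e}) I"
    obtain u where u: "u \<in> I - {r}" "e = {u, q u}"
      using \<open>e \<in> ?F\<close> unfolding parent_edges_def by blast
    \<comment> \<open>Without the edge e, no path leaves the subtree below u.\<close>
    have "(b, u) \<in> parent_rel\<^sup>*"
      if "(a, b) \<in> (induced_edge_rel (?F - {e}) I)\<^sup>*" "(a, u) \<in> parent_rel\<^sup>*" for a b
      using that
    proof (induction rule: rtrancl_induct)
      case (step b c)
      then obtain w where w: "w \<in> I - {r}" "{b, c} = {w, q w}" "w \<noteq> u"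
        using u unfolding induced_edge_rel_def parent_edges_def by auto
      then consider "b = w" "c = q w" | "c = w" "b = q w" by (auto simp: doubleton_eq_iff)
      then show ?case
      proof cases
        case 1
        with step w(3) show ?thesis by (auto elim: converse_rtranclE)
      next
        case 2
        with step w(1) show ?thesis by (auto intro: converse_rtrancl_into_rtrancl)
      qed
    qed
    moreover have "(u, q u) \<in> (induced_edge_rel (?F - {e}) I)\<^sup>*"
      using connected' u parent_in unfolding connected_in_iff_induced_edge_rel by blast
    ultimately have "q u \<le> u" using parent_rel_rtrancl_le by blast
    then show False using less_parent[OF u(1)] by simp
  qed
  show ?thesis unfolding is_tree_def using simple root_in connected bridge by auto
qed

lemma tree_decomposition_parent_edges:
  "tree_decomposition I (parent_edges I r q) I (parent_edges I r q) (\<lambda>t. if t = r then {t} else {t, q t})"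
    (is "tree_decomposition I ?F I ?F ?B")
proof -
  have bag_connected: "connected_in ?F {t \<in> I. v \<in> ?B t}" if "v \<in> I" for v
  proof (rule connected_in_if_all_reach)
    show "v \<in> {t \<in> I. v \<in> ?B t}" using \<open>v \<in> I\<close> by simp
    fix t assume t: "t \<in> {t \<in> I. v \<in> ?B t}"
    show "(t, v) \<in> (induced_edge_rel ?F {t \<in> I. v \<in> ?B t})\<^sup>*"
    proof (cases "t = v")
      case False
      then have "t \<in> I - {r}" "q t = v" using t by (auto split: if_splits)
      then have "{t, v} \<in> ?F" unfolding parent_edges_def by blast
      with t \<open>v \<in> I\<close> show ?thesis by (intro r_into_rtrancl) (simp add: induced_edge_rel_def)
    qed simp
  qed
  show ?thesis
    unfolding tree_decomposition_def
    using is_tree_parent_edges finite_vertices parent_in bag_connected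
    by (auto simp: parent_edges_def)
qed

lemma treewidth_parent_edges:
  assumes "I \<noteq> {r}"
  shows "treewidth I (parent_edges I r q) = 1"
proof -
  obtain t where "t \<in> I - {r}" using assms root_in by blast
  then have "{t, q t} \<in> parent_edges I r q" "card {t, q t} = 2"
    using less_parent[of t] unfolding parent_edges_def by auto
  moreover have "\<forall>s\<in>I. card (if s = r then {s} else {s, q s}) \<le> 2"
    by (simp add: card_insert_if)
  ultimately show ?thesis
    using treewidth_eq_1I[OF tree_decomposition_parent_edges] by blast
qed

end

lemma Lmax_le_iff:
  assumes "1 \<le> n"
  shows "Lmax n d C \<le> L \<longleftrightarrow> (\<forall>j\<in>{1..n}. int (C j) - d j \<le> L)"
  using assms by (simp add: Lmax_def)

lemma optimal_schedule_meets_due_dates: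
  assumes "optimal_schedule n E d C" "feasible_schedule n E C'"
    and "\<forall>j\<in>{1..n}. int (C' j) \<le> d j" and "j \<in> {1..n}"
  shows "int (C j) \<le> d j"
proof -
  have "1 \<le> n" using \<open>j \<in> {1..n}\<close> by simp
  have "Lmax n d C \<le> Lmax n d C'"
    using assms(1,2) unfolding optimal_schedule_def by blast
  also have "\<dots> \<le> 0" using assms(3) Lmax_le_iff[OF \<open>1 \<le> n\<close>] by simp
  finally show ?thesis using assms(4) Lmax_le_iff[OF \<open>1 \<le> n\<close>] by fastforce
qed

lemma Cmax_eqI:
  assumes "j \<in> {1..n}" "C j = M" "\<forall>i\<in>{1..n}. C i \<le> M"
  shows "Cmax n C = M"
  unfolding Cmax_def using assms by (intro Max_eqI) auto

lemma proper_colouring_forced: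
  fixes C lab :: "'a \<Rightarrow> nat"
  assumes proper: "\<And>u v. {u, v} \<in> E \<Longrightarrow> C u \<noteq> C v"
    and lower_neighbours: "\<And>v i. v \<in> V \<Longrightarrow> i < lab v \<Longrightarrow> \<exists>u\<in>V. lab u = i \<and> {u, v} \<in> E"
    and bounds: "\<And>v. v \<in> V \<Longrightarrow> 1 \<le> C v \<and> C v \<le> lab v + 1"
    and "v \<in> V"
  shows "C v = lab v + 1"
  using \<open>v \<in> V\<close>
proof (induction "lab v" arbitrary: v rule: less_induct)
  case less
  have avoided: "C v \<noteq> i + 1" if i: "i < lab v" for i
  proof -
    obtain u where "u \<in> V" "lab u = i" "{u, v} \<in> E"
      using lower_neighbours[OF less.prems i] by blast
    with less.hyps i proper show ?thesis by fastforce
  qed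
  have "1 \<le> C v" "C v \<le> lab v + 1" using bounds[OF less.prems] by auto
  moreover from this have "\<not> C v - 1 < lab v" using avoided[of "C v - 1"] by auto
  ultimately show ?case by linarith
qed

lemma multiplicity_two_pow_times_odd: "odd m \<Longrightarrow> multiplicity 2 (2 ^ j * m :: nat) = j"
  by (rule multiplicity_decomposeI) auto

lemma two_pow_multiplicity_le: "0 < (v :: nat) \<Longrightarrow> 2 ^ multiplicity 2 v \<le> v"
  by (simp add: dvd_imp_le multiplicity_dvd)

lemma multiplicity_two_le:
  assumes "0 < (v :: nat)" "v \<le> 2 ^ k"
  shows "multiplicity 2 v \<le> k"
proof (rule power_le_imp_le_exp)
  show "(2::nat) ^ multiplicity 2 v \<le> 2 ^ k"
    using two_pow_multiplicity_le[OF assms(1)] assms(2) by linarith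
qed simp

text \<open>Adding the lowest set bit: the children of v are the v - 2^i with i < multiplicity 2 v,
  so the subtree below v is a binomial tree of order multiplicity 2 v.\<close>
definition fenwick_parent :: "nat \<Rightarrow> nat" where
  "fenwick_parent v = v + 2 ^ multiplicity 2 v"

lemma fenwick_parent_le:
  assumes "0 < v" "v < 2 ^ k"
  shows "fenwick_parent v \<le> 2 ^ k"
proof -
  let ?j = "multiplicity 2 v"
  have "(2::nat) ^ ?j < 2 ^ k" using two_pow_multiplicity_le[OF \<open>0 < v\<close>] \<open>v < 2 ^ k\<close> by linarith
  then have "(2::nat) ^ ?j dvd 2 ^ k - v"
    by (intro dvd_diff_nat le_imp_power_dvd multiplicity_dvd) simp
  moreover have "0 < 2 ^ k - v" using \<open>v < 2 ^ k\<close> by simp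
  ultimately have "2 ^ ?j \<le> 2 ^ k - v" by (rule dvd_imp_le)
  then show ?thesis unfolding fenwick_parent_def using \<open>v < 2 ^ k\<close> by linarith
qed

lemma multiplicity_less_fenwick_parent:
  assumes "0 < v"
  shows "multiplicity 2 v < multiplicity 2 (fenwick_parent v)"
proof -
  obtain m where m: "v = 2 ^ multiplicity 2 v * m" "odd m"
    using multiplicity_decompose'[of v 2] assms by auto
  then obtain c where "m + 1 = 2 * c" by (metis evenE odd_Suc_div_two odd_even_add odd_one)
  have "fenwick_parent v = 2 ^ multiplicity 2 v * (m + 1)"
    unfolding fenwick_parent_def by (subst m(1)) (simp add: algebra_simps)
  also have "\<dots> = 2 ^ Suc (multiplicity 2 v) * c" using \<open>m + 1 = 2 * c\<close> by simp
  finally have "fenwick_parent v = 2 ^ Suc (multiplicity 2 v) * c" .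
  then have "2 ^ Suc (multiplicity 2 v) dvd fenwick_parent v" by simp
  moreover have "fenwick_parent v \<noteq> 0" by (simp add: fenwick_parent_def)
  ultimately have "Suc (multiplicity 2 v) \<le> multiplicity 2 (fenwick_parent v)"
    by (intro multiplicity_geI) auto
  then show ?thesis by simp
qed

lemma fenwick_child:
  assumes "0 < v" "i < multiplicity 2 v"
  shows "0 < v - 2 ^ i" "multiplicity 2 (v - 2 ^ i) = i" "fenwick_parent (v - 2 ^ i) = v"
proof -
  obtain m where m: "v = 2 ^ multiplicity 2 v * m" "odd m"
    using multiplicity_decompose'[of v 2] assms by auto
  define c where "c = 2 ^ (multiplicity 2 v - i) * m"
  have v: "v = 2 ^ i * c" unfolding c_def using m(1) assms(2)
    by (metis le_add_diff_inverse less_imp_le mult.assoc power_add)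
  moreover have "even c" "0 < c" unfolding c_def using assms(2) m(2) by (auto intro: odd_pos)
  ultimately have child: "v - 2 ^ i = 2 ^ i * (c - 1)" "odd (c - 1)" "0 < c - 1"
    by (auto simp: right_diff_distrib' elim: evenE)
  then show pos: "0 < v - 2 ^ i" by simp
  show mult: "multiplicity 2 (v - 2 ^ i) = i" using child multiplicity_two_pow_times_odd by simp
  show "fenwick_parent (v - 2 ^ i) = v"
    unfolding fenwick_parent_def mult using pos by simp
qed

lemma rooted_by_parent_fenwick: "rooted_by_parent {1..2 ^ k} (2 ^ k) fenwick_parent"
proof
  fix t :: nat assume "t \<in> {1..2 ^ k} - {2 ^ k}"
  then have "0 < t" "t < 2 ^ k" by auto
  moreover from this have "fenwick_parent t \<le> 2 ^ k" by (rule fenwick_parent_le)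
  moreover have "t < fenwick_parent t" by (simp add: fenwick_parent_def)
  ultimately show "fenwick_parent t \<in> {1..2 ^ k}" "t < fenwick_parent t" by auto
qed auto

definition fenwick_tree :: "nat \<Rightarrow> nat set set" where
  "fenwick_tree k = parent_edges {1..2 ^ k} (2 ^ k) fenwick_parent"

lemma fenwick_tree_edge_multiplicity:
  assumes "{u, v} \<in> fenwick_tree k"
  shows "multiplicity 2 u \<noteq> multiplicity 2 v"
proof -
  obtain t where "t \<in> {1..2 ^ k} - {2 ^ k}" "{u, v} = {t, fenwick_parent t}"
    using assms unfolding fenwick_tree_def parent_edges_def by blast
  moreover from this have "multiplicity 2 t < multiplicity 2 (fenwick_parent t)"
    by (intro multiplicity_less_fenwick_parent) simp
  ultimately show ?thesis by (auto simp: doubleton_eq_iff)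
qed

lemma fenwick_tree_lower_neighbours:
  assumes "v \<in> {1..2 ^ k}" "i < multiplicity 2 v"
  shows "\<exists>u\<in>{1..2 ^ k}. multiplicity 2 u = i \<and> {u, v} \<in> fenwick_tree k"
proof -
  let ?u = "v - 2 ^ i"
  have "0 < v" using assms(1) by simp
  note child = fenwick_child[OF this assms(2)]
  then have "?u \<in> {1..2 ^ k} - {2 ^ k}" using assms(1) by auto
  then have "{?u, v} \<in> fenwick_tree k"
    unfolding fenwick_tree_def parent_edges_def using child(3) by force
  then show ?thesis using child(2) \<open>?u \<in> _\<close> by blast
qed

lemma optimal_schedule_fenwick_tree:
  assumes "optimal_schedule (2 ^ k) (fenwick_tree k) (\<lambda>v. int (multiplicity 2 v + 1)) C"
    and "v \<in> {1..2 ^ k}"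
  shows "C v = multiplicity 2 v + 1"
proof -
  have "feasible_schedule (2 ^ k) (fenwick_tree k) (\<lambda>v. multiplicity 2 v + 1)"
    unfolding feasible_schedule_def using fenwick_tree_edge_multiplicity by auto
  then have due: "C u \<le> multiplicity 2 u + 1" if "u \<in> {1..2 ^ k}" for u
    using optimal_schedule_meets_due_dates[OF assms(1) _ _ that] by force
  from assms(1) have "feasible_schedule (2 ^ k) (fenwick_tree k) C"
    by (simp add: optimal_schedule_def)
  then show ?thesis
    using proper_colouring_forced[of "fenwick_tree k" C "{1..2 ^ k}" "multiplicity 2"]
      fenwick_tree_lower_neighbours due assms(2)
    unfolding feasible_schedule_def by blast
qed

theorem lemma4:
  fixes n :: nat
  assumes "\<exists>k\<ge>1. n = 2 ^ k"
  shows "\<exists>(E :: nat set set) (d :: nat \<Rightarrow> int).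
           simple_graph {1..n} E \<and> treewidth {1..n} E = 1 \<and>
           (\<forall>C. optimal_schedule n E d C \<longrightarrow> real (Cmax n C) = log 2 (real n) + 1)"
proof -
  obtain k where "k \<ge> 1" and n: "n = 2 ^ k" using assms by blast
  interpret fenwick: rooted_by_parent "{1..n}" n fenwick_parent
    unfolding n by (rule rooted_by_parent_fenwick)
  have "1 \<noteq> n" using \<open>k \<ge> 1\<close> unfolding n by (cases k) auto
  then have "treewidth {1..n} (fenwick_tree k) = 1"
    unfolding fenwick_tree_def n[symmetric] by (intro fenwick.treewidth_parent_edges) auto
  moreover have "simple_graph {1..n} (fenwick_tree k)"
    using fenwick.is_tree_parent_edges unfolding fenwick_tree_def n is_tree_def by blast
  moreover have "Cmax n C = k + 1"
    if "optimal_schedule n (fenwick_tree k) (\<lambda>v. int (multiplicity 2 v + 1)) C" for C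
  proof (rule Cmax_eqI)
    show "n \<in> {1..n}" "C n = k + 1"
      using optimal_schedule_fenwick_tree[OF that[unfolded n]] n by (auto simp: multiplicity_same_power)
    show "\<forall>v\<in>{1..n}. C v \<le> k + 1"
      using optimal_schedule_fenwick_tree[OF that[unfolded n]] multiplicity_two_le n by fastforce
  qed
  ultimately show ?thesis using n by (intro exI[of _ "fenwick_tree k"] exI[of _ "\<lambda>v. int (multiplicity 2 v + 1)"]) (auto simp: log_nat_power)
qed

end
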